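(* Let $\Gamma$ be a group and $\mathcal{S}=\mathcal{S}(\Pi,A,\xi)$ a Gr-category of the type $(\Pi,A)$. Let $(\theta,F)$ and $(\mu,G)$ be enough strict factor sets on $\Gamma$ with coefficients in $\mathcal{S}$ which are cohomologous. Then they determine the same structure of $\Pi$-module $\Gamma$-equivariant on $A$, and their induced 3-cocycles $h^{(\theta,F)},h^{(\mu,G)}\in Z^3_\Gamma(\Pi,A)$ are cohomologous, i.e. $h^{(\theta,F)}-h^{(\mu,G)}=\partial g$ for some $g\in C^2_\Gamma(\Pi,A)$.
   Context: A Gr-category of the type $(\Pi,A)$ ($\Pi$ a group, $A$ a left $\Pi$-module), $\mathcal{S}(\Pi,A,\xi)$: objects are elements of $\Pi$, morphisms only automorphisms $\mathrm{Aut}(x)=\{x\}\times A$, composition $(x,u)\circ(x,v)=(x,u+v)$, tensor $x\otimes y=xy$, $(x,u)\otimes(y,v)=(xy,u+xv)$, associativity constraint $(xyz,\xi(x,y,z))$ with $\xi$ a normalized 3-cocycle of $\Pi$ in $A$, strict unit constraints (unit $I=1$). Monoidal functors $F=(F,\widetilde F,\widehat F)$ have $\widetilde F_{x,y}:F(x\otimes y)\to F(x)\otimes F(y)$, $\widehat F:F(I)\to I$. A factor set on $\Gamma$ with coefficients in $\mathcal{S}$: monoidal autoequivalences $F^\sigma$ and isomorphisms of monoidal functors $\theta^{\sigma,\tau}:F^\sigma F^\tau\to F^{\sigma\tau}$ with $F^1=\mathrm{id}$, $\theta^{1,\sigma}=\theta^{\sigma,1}=\mathrm{id}$, $\theta^{\sigma\tau,\gamma}\circ(\theta^{\sigma,\tau}F^\gamma)=\theta^{\sigma,\tau\gamma}\circ(F^\sigma\theta^{\tau,\gamma})$;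 enough strict means $\widehat{F^\sigma}=\mathrm{id}_I$ for all $\sigma$. $(\theta,F)$ and $(\mu,G)$ are cohomologous if there are isomorphisms of monoidal functors $u^\sigma:F^\sigma\to G^\sigma$ with $u^1=\mathrm{id}$ and $u^{\sigma\tau}\circ\theta^{\sigma,\tau}=\mu^{\sigma,\tau}\circ(u^\sigma G^\tau)\circ(F^\sigma u^\tau)$. A factor set $(\theta,F)$ determines a $\Pi$-module $\Gamma$-equivariant structure on $A$ by $\sigma x=F^\sigma(x)$, $F^\sigma(x,a)=(\sigma x,\sigma a)$ (so $\sigma(xa)=(\sigma x)(\sigma a)$). For an enough strict $(\theta,F)$, writing $\widetilde{F^\sigma}_{x,y}=(\sigma(xy),\tilde f(x,y,\sigma))$ and $\theta^{\sigma,\tau}_x=(\sigma\tau x,t(x,\sigma,\tau))$, the induced 3-cocycle $h^{(\theta,F)}:\Pi^3\cup(\Pi^2\times\Gamma)\cup(\Pi\times\Gamma^2)\to A$ is $\xi$ on $\Pi^3$, $\tilde f$ on $\Pi^2\times\Gamma$, $t$ on $\Pi\times\Gamma^2$; it lies in $Z^3_\Gamma(\Pi,A)$, the group of normalized maps (vanishing when any argument is an identity element) satisfying the Γ-operator 3-cocycle identities. $C^2_\Gamma(\Pi,A)$ is the group of normalized maps $g:\Pi^2\cup(\Pi\times\Gamma)\to A$, and $\partial g$ is given by $(\partial g)(x,y,z)=x\,g(y,z)-g(xy,z)+g(x,yz)-g(x,y)$, $(\partial g)(x,y,\sigma)=\sigma g(x,y)-g(\sigma x,\sigma y)-(\sigma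 x)g(y,\sigma)+g(xy,\sigma)-g(x,\sigma)$, $(\partial g)(x,\sigma,\tau)=\sigma g(x,\tau)-g(x,\sigma\tau)+g(\tau x,\sigma)$. *)

theory Defs
  imports "HOL-Algebra.Group"
begin

text \<open>Concrete encoding of the Gr-category S(Pi,A,xi): objects are elements of
 carrier P, a morphism (x,u) is encoded by its A-component u (only automorphisms),
 composition is addition, (x,u) tensor (y,v) = (xy, u + x v), associator xi.\<close>

definition pi_module :: "('p,'m) monoid_scheme \<Rightarrow> ('p \<Rightarrow> 'a::ab_group_add \<Rightarrow> 'a) \<Rightarrow> bool" where
  "pi_module P act \<longleftrightarrow>
     (\<forall>x\<in>carrier P. \<forall>a b. act x (a + b) = act x a + act x b) \<and>
     (\<forall>a. act \<one>\<^bsub>P\<^esub> a = a) \<and>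
     (\<forall>x\<in>carrier P. \<forall>y\<in>carrier P. \<forall>a. act (x \<otimes>\<^bsub>P\<^esub> y) a = act x (act y a))"

definition normalized_3cocycle ::
  "('p,'m) monoid_scheme \<Rightarrow> ('p \<Rightarrow> 'a::ab_group_add \<Rightarrow> 'a) \<Rightarrow> ('p \<Rightarrow> 'p \<Rightarrow> 'p \<Rightarrow> 'a) \<Rightarrow> bool" where
  "normalized_3cocycle P act \<xi> \<longleftrightarrow>
     (\<forall>x\<in>carrier P. \<forall>y\<in>carrier P. \<forall>z\<in>carrier P. \<forall>w\<in>carrier P.
        act x (\<xi> y z w) - \<xi> (x \<otimes>\<^bsub>P\<^esub> y) z w + \<xi> x (y \<otimes>\<^bsub>P\<^esub> z) w
          - \<xi> x y (z \<otimes>\<^bsub>P\<^esub> w) + \<xi> x y z = 0) \<and>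
     (\<forall>x\<in>carrier P. \<forall>y\<in>carrier P.
        \<xi> \<one>\<^bsub>P\<^esub> x y = 0 \<and> \<xi> x \<one>\<^bsub>P\<^esub> y = 0 \<and> \<xi> x y \<one>\<^bsub>P\<^esub> = 0)"

text \<open>A functor S -> S together with monoidal data:
 fo = action on objects, fm x = action on Aut(x) (i.e. F(x,u) = (fo x, fm x u)),
 ft x y = A-component of the morphism F~_{x,y} : F(xy) -> F x \<otimes> F y,
 fh = A-component of F^ : F(I) -> I.\<close>
record ('p,'a) mfun =
  fo :: "'p \<Rightarrow> 'p"
  fm :: "'p \<Rightarrow> 'a \<Rightarrow> 'a"
  ft :: "'p \<Rightarrow> 'p \<Rightarrow> 'a"
  fh :: "'a"

definition monoidal_functor ::
  "('p,'m) monoid_scheme \<Rightarrow> ('p \<Rightarrow> 'a::ab_group_add \<Rightarrow> 'a) \<Rightarrow> ('p \<Rightarrow> 'p \<Rightarrow> 'p \<Rightarrow> 'a)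
     \<Rightarrow> ('p,'a) mfun \<Rightarrow> bool" where
  "monoidal_functor P act \<xi> F \<longleftrightarrow>
     \<comment> \<open>functor: objects to objects, composition (= addition) preserved\<close>
     (\<forall>x\<in>carrier P. fo F x \<in> carrier P) \<and>
     (\<forall>x\<in>carrier P. \<forall>u v. fm F x (u + v) = fm F x u + fm F x v) \<and>
     \<comment> \<open>F~_{x,y} and F^ are morphisms (only automorphisms exist)\<close>
     (\<forall>x\<in>carrier P. \<forall>y\<in>carrier P. fo F (x \<otimes>\<^bsub>P\<^esub> y) = fo F x \<otimes>\<^bsub>P\<^esub> fo F y) \<and>
     fo F \<one>\<^bsub>P\<^esub> = \<one>\<^bsub>P\<^esub> \<and>
     \<comment> \<open>naturality of F~\<close>
     (\<forall>x\<in>carrier P. \<forall>y\<in>carrier P. \<forall>u v.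
        ft F x y + fm F (x \<otimes>\<^bsub>P\<^esub> y) (u + act x v)
          = (fm F x u + act (fo F x) (fm F y v)) + ft F x y) \<and>
     \<comment> \<open>compatibility with the associativity constraints\<close>
     (\<forall>x\<in>carrier P. \<forall>y\<in>carrier P. \<forall>z\<in>carrier P.
        act (fo F x) (ft F y z) + ft F x (y \<otimes>\<^bsub>P\<^esub> z) + fm F (x \<otimes>\<^bsub>P\<^esub> y \<otimes>\<^bsub>P\<^esub> z) (\<xi> x y z)
          = \<xi> (fo F x) (fo F y) (fo F z) + ft F x y + ft F (x \<otimes>\<^bsub>P\<^esub> y) z) \<and>
     \<comment> \<open>compatibility with the (strict) unit constraints\<close>
     (\<forall>x\<in>carrier P. fh F + ft F \<one>\<^bsub>P\<^esub> x = 0 \<and> act (fo F x) (fh F) + ft F x \<one>\<^bsub>P\<^esub> = 0)"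

definition mequivalence :: "('p,'m) monoid_scheme \<Rightarrow> ('p,'a) mfun \<Rightarrow> bool" where
  "mequivalence P F \<longleftrightarrow> bij_betw (fo F) (carrier P) (carrier P) \<and> (\<forall>x\<in>carrier P. bij (fm F x))"

definition mcomp :: "('p,'m) monoid_scheme \<Rightarrow> ('p,'a::ab_group_add) mfun \<Rightarrow> ('p,'a) mfun \<Rightarrow> ('p,'a) mfun" where
  "mcomp P F G = \<lparr> fo = (\<lambda>x. fo F (fo G x)),
                    fm = (\<lambda>x u. fm F (fo G x) (fm G x u)),
                    ft = (\<lambda>x y. fm F (fo G (x \<otimes>\<^bsub>P\<^esub> y)) (ft G x y) + ft F (fo G x) (fo G y)),
                    fh = fm F (fo G \<one>\<^bsub>P\<^esub>) (fh G) + fh F \<rparr>"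

text \<open>t is (the family of A-components of) a morphism (= isomorphism) of monoidal
 functors F -> G, with components t_x = (F x, t x).\<close>
definition mnat :: "('p,'m) monoid_scheme \<Rightarrow> ('p \<Rightarrow> 'a::ab_group_add \<Rightarrow> 'a)
     \<Rightarrow> ('p,'a) mfun \<Rightarrow> ('p,'a) mfun \<Rightarrow> ('p \<Rightarrow> 'a) \<Rightarrow> bool" where
  "mnat P act F G t \<longleftrightarrow>
     (\<forall>x\<in>carrier P. fo F x = fo G x) \<and>
     (\<forall>x\<in>carrier P. \<forall>u. t x + fm F x u = fm G x u + t x) \<and>
     (\<forall>x\<in>carrier P. \<forall>y\<in>carrier P.
        ft G x y + t (x \<otimes>\<^bsub>P\<^esub> y) = (t x + act (fo F x) (t y)) + ft F x y) \<and>
     fh G + t \<one>\<^bsub>P\<^esub> = fh F"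

text \<open>Factor set (theta, F) on Gamma with coefficients in S(P,A,xi):
 F sigma = F^sigma, t x sigma tau = A-component of theta^{sigma,tau}_x.\<close>
definition factor_set :: "('p,'m) monoid_scheme \<Rightarrow> ('p \<Rightarrow> 'a::ab_group_add \<Rightarrow> 'a)
     \<Rightarrow> ('p \<Rightarrow> 'p \<Rightarrow> 'p \<Rightarrow> 'a) \<Rightarrow> ('g,'n) monoid_scheme
     \<Rightarrow> ('g \<Rightarrow> ('p,'a) mfun) \<Rightarrow> ('p \<Rightarrow> 'g \<Rightarrow> 'g \<Rightarrow> 'a) \<Rightarrow> bool" where
  "factor_set P act \<xi> \<Gamma> F t \<longleftrightarrow>
     (\<forall>\<sigma>\<in>carrier \<Gamma>. monoidal_functor P act \<xi> (F \<sigma> ) \<and> mequivalence P (F \<sigma>)) \<and>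
     (\<forall>\<sigma>\<in>carrier \<Gamma>. \<forall>\<tau>\<in>carrier \<Gamma>.
        mnat P act (mcomp P (F \<sigma>) (F \<tau>)) (F (\<sigma> \<otimes>\<^bsub>\<Gamma>\<^esub> \<tau>)) (\<lambda>x. t x \<sigma> \<tau>)) \<and>
     \<comment> \<open>F^1 = id\<close>
     (\<forall>x\<in>carrier P. fo (F \<one>\<^bsub>\<Gamma>\<^esub>) x = x \<and> (\<forall>u. fm (F \<one>\<^bsub>\<Gamma>\<^esub>) x u = u)) \<and>
     (\<forall>x\<in>carrier P. \<forall>y\<in>carrier P. ft (F \<one>\<^bsub>\<Gamma>\<^esub>) x y = 0) \<and>
     fh (F \<one>\<^bsub>\<Gamma>\<^esub>) = 0 \<and>
     \<comment> \<open>theta^{1,sigma} = theta^{sigma,1} = id\<close>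
     (\<forall>\<sigma>\<in>carrier \<Gamma>. \<forall>x\<in>carrier P. t x \<one>\<^bsub>\<Gamma>\<^esub> \<sigma> = 0 \<and> t x \<sigma> \<one>\<^bsub>\<Gamma>\<^esub> = 0) \<and>
     \<comment> \<open>theta^{sigma tau,gamma} o (theta^{sigma,tau} F^gamma) = theta^{sigma,tau gamma} o (F^sigma theta^{tau,gamma})\<close>
     (\<forall>\<sigma>\<in>carrier \<Gamma>. \<forall>\<tau>\<in>carrier \<Gamma>. \<forall>\<gamma>\<in>carrier \<Gamma>. \<forall>x\<in>carrier P.
        t x (\<sigma> \<otimes>\<^bsub>\<Gamma>\<^esub> \<tau>) \<gamma> + t (fo (F \<gamma>) x) \<sigma> \<tau>
          = t x \<sigma> (\<tau> \<otimes>\<^bsub>\<Gamma>\<^esub> \<gamma>) + fm (F \<sigma>) (fo (F \<tau>) (fo (F \<gamma>) x)) (t x \<tau> \<gamma>))"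

definition enough_strict :: "('g,'n) monoid_scheme \<Rightarrow> ('g \<Rightarrow> ('p,'a::zero) mfun) \<Rightarrow> bool" where
  "enough_strict \<Gamma> F \<longleftrightarrow> (\<forall>\<sigma>\<in>carrier \<Gamma>. fh (F \<sigma>) = 0)"

definition cohomologous_fs :: "('p,'m) monoid_scheme \<Rightarrow> ('p \<Rightarrow> 'a::ab_group_add \<Rightarrow> 'a)
     \<Rightarrow> ('g,'n) monoid_scheme
     \<Rightarrow> ('g \<Rightarrow> ('p,'a) mfun) \<Rightarrow> ('p \<Rightarrow> 'g \<Rightarrow> 'g \<Rightarrow> 'a)
     \<Rightarrow> ('g \<Rightarrow> ('p,'a) mfun) \<Rightarrow> ('p \<Rightarrow> 'g \<Rightarrow> 'g \<Rightarrow> 'a) \<Rightarrow> bool" where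
  "cohomologous_fs P act \<Gamma> F t G m \<longleftrightarrow>
     (\<exists>u :: 'p \<Rightarrow> 'g \<Rightarrow> 'a.
        (\<forall>\<sigma>\<in>carrier \<Gamma>. mnat P act (F \<sigma>) (G \<sigma>) (\<lambda>x. u x \<sigma>)) \<and>
        (\<forall>x\<in>carrier P. u x \<one>\<^bsub>\<Gamma>\<^esub> = 0) \<and>
        (\<forall>\<sigma>\<in>carrier \<Gamma>. \<forall>\<tau>\<in>carrier \<Gamma>. \<forall>x\<in>carrier P.
           u x (\<sigma> \<otimes>\<^bsub>\<Gamma>\<^esub> \<tau>) + t x \<sigma> \<tau>
             = m x \<sigma> \<tau> + (u (fo (G \<tau>) x) \<sigma> + fm (F \<sigma>) (fo (F \<tau>) x) (u x \<tau>))))"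

text \<open>Gamma-equivariant Pi-module structure determined by a factor set:
 sigma x = fo (F sigma) x and sigma a given by F^sigma(x,a) = (sigma x, sigma a).\<close>

text \<open>3-cochains: maps on Pi^3 \<union> Pi^2 x Gamma \<union> Pi x Gamma^2, as a triple.\<close>
type_synonym ('p,'g,'a) cochain3 = "('p \<Rightarrow> 'p \<Rightarrow> 'p \<Rightarrow> 'a) \<times> ('p \<Rightarrow> 'p \<Rightarrow> 'g \<Rightarrow> 'a) \<times> ('p \<Rightarrow> 'g \<Rightarrow> 'g \<Rightarrow> 'a)"
text \<open>2-cochains: maps on Pi^2 \<union> Pi x Gamma, as a pair.\<close>
type_synonym ('p,'g,'a) cochain2 = "('p \<Rightarrow> 'p \<Rightarrow> 'a) \<times> ('p \<Rightarrow> 'g \<Rightarrow> 'a)"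

definition induced_cocycle :: "('p \<Rightarrow> 'p \<Rightarrow> 'p \<Rightarrow> 'a) \<Rightarrow> ('g \<Rightarrow> ('p,'a) mfun)
     \<Rightarrow> ('p \<Rightarrow> 'g \<Rightarrow> 'g \<Rightarrow> 'a) \<Rightarrow> ('p,'g,'a) cochain3" where
  "induced_cocycle \<xi> F t = (\<xi>, (\<lambda>x y \<sigma>. ft (F \<sigma>) x y), t)"

definition C2_Gamma :: "('p,'m) monoid_scheme \<Rightarrow> ('g,'n) monoid_scheme \<Rightarrow> ('p,'g,'a::zero) cochain2 set" where
  "C2_Gamma P \<Gamma> = {(g1, g2).
      (\<forall>x\<in>carrier P. g1 \<one>\<^bsub>P\<^esub> x = 0 \<and> g1 x \<one>\<^bsub>P\<^esub> = 0) \<and>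
      (\<forall>x\<in>carrier P. g2 x \<one>\<^bsub>\<Gamma>\<^esub> = 0) \<and> (\<forall>\<sigma>\<in>carrier \<Gamma>. g2 \<one>\<^bsub>P\<^esub> \<sigma> = 0)}"

definition cobound2 :: "('p,'m) monoid_scheme \<Rightarrow> ('g,'n) monoid_scheme \<Rightarrow> ('p \<Rightarrow> 'a::ab_group_add \<Rightarrow> 'a)
     \<Rightarrow> ('g \<Rightarrow> 'p \<Rightarrow> 'p) \<Rightarrow> ('g \<Rightarrow> 'a \<Rightarrow> 'a) \<Rightarrow> ('p,'g,'a) cochain2 \<Rightarrow> ('p,'g,'a) cochain3" where
  "cobound2 P \<Gamma> act go ga g =
     (case g of (g1, g2) \<Rightarrow>
       ((\<lambda>x y z. act x (g1 y z) - g1 (x \<otimes>\<^bsub>P\<^esub> y) z + g1 x (y \<otimes>\<^bsub>P\<^esub> z) - g1 x y),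
        (\<lambda>x y \<sigma>. ga \<sigma> (g1 x y) - g1 (go \<sigma> x) (go \<sigma> y) - act (go \<sigma> x) (g2 y \<sigma>)
                   + g2 (x \<otimes>\<^bsub>P\<^esub> y) \<sigma> - g2 x \<sigma>),
        (\<lambda>x \<sigma> \<tau>. ga \<sigma> (g2 x \<tau>) - g2 x (\<sigma> \<otimes>\<^bsub>\<Gamma>\<^esub> \<tau>) + g2 (go \<tau> x) \<sigma>)))"

definition cochain3_eq :: "('p,'m) monoid_scheme \<Rightarrow> ('g,'n) monoid_scheme
     \<Rightarrow> ('p,'g,'a) cochain3 \<Rightarrow> ('p,'g,'a) cochain3 \<Rightarrow> bool" where
  "cochain3_eq P \<Gamma> h k \<longleftrightarrow>
     (case h of (h1, h2, h3) \<Rightarrow> case k of (k1, k2, k3) \<Rightarrow>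
       (\<forall>x\<in>carrier P. \<forall>y\<in>carrier P. \<forall>z\<in>carrier P. h1 x y z = k1 x y z) \<and>
       (\<forall>x\<in>carrier P. \<forall>y\<in>carrier P. \<forall>\<sigma>\<in>carrier \<Gamma>. h2 x y \<sigma> = k2 x y \<sigma>) \<and>
       (\<forall>x\<in>carrier P. \<forall>\<sigma>\<in>carrier \<Gamma>. \<forall>\<tau>\<in>carrier \<Gamma>. h3 x \<sigma> \<tau> = k3 x \<sigma> \<tau>))"

definition minus3 :: "('p,'g,'a::ab_group_add) cochain3 \<Rightarrow> ('p,'g,'a) cochain3 \<Rightarrow> ('p,'g,'a) cochain3" where
  "minus3 h k = (case h of (h1, h2, h3) \<Rightarrow> case k of (k1, k2, k3) \<Rightarrow>
     ((\<lambda>x y z. h1 x y z - k1 x y z), (\<lambda>x y \<sigma>. h2 x y \<sigma> - k2 x y \<sigma>), (\<lambda>x \<sigma> \<tau>. h3 x \<sigma> \<tau> - k3 x \<sigma> \<tau>)))"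

end

theory Submission
  imports Defs
begin

text \<open>Cohomologous factor sets are related by a family u of monoidal natural
 isomorphisms u^sigma : F^sigma -> G^sigma. Since S has only automorphisms, u forces F^sigma and
 G^sigma to agree on objects and morphisms, so the induced equivariant structures coincide.
 The 2-cochain g = (0, u) then witnesses h^(theta,F) - h^(mu,G) = dg: on Pi^3 both sides
 vanish, on Pi^2 x Gamma the difference is the monoidality of u^sigma, and on Pi x Gamma^2 it
 is the cohomology relation between theta and mu. Enough strictness makes u normalized at
 the unit object.\<close>

lemma pi_module_act_zero:
  assumes "pi_module P act" "x \<in> carrier P"
  shows "act x 0 = 0"
proof -
  have "act x (0 + 0) = act x 0 + act x 0"
    using assms unfolding pi_module_def by blast
  then show ?thesis by simp
qed

lemma monoidal_functor_fm_zero: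
  assumes "monoidal_functor P act \<xi> F" "x \<in> carrier P"
  shows "fm F x 0 = 0"
proof -
  have "fm F x (0 + 0) = fm F x 0 + fm F x 0"
    using assms unfolding monoidal_functor_def by blast
  then show ?thesis by simp
qed

text \<open>Naturality of F~_{1,y} applied to the morphism (1,u) \<otimes> (y,0) = (y,u) shows that
 F acts on Aut(y) = A independently of the object y.\<close>
lemma monoidal_functor_fm_eq_fm_one:
  assumes "monoid P" "pi_module P act" "monoidal_functor P act \<xi> F" "y \<in> carrier P"
  shows "fm F y u = fm F \<one>\<^bsub>P\<^esub> u"
proof -
  have one: "\<one>\<^bsub>P\<^esub> \<in> carrier P" using assms(1) by (rule monoid.one_closed)
  have "ft F \<one>\<^bsub>P\<^esub> y + fm F (\<one>\<^bsub>P\<^esub> \<otimes>\<^bsub>P\<^esub> y) (u + act \<one>\<^bsub>P\<^esub> 0)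
          = (fm F \<one>\<^bsub>P\<^esub> u + act (fo F \<one>\<^bsub>P\<^esub>) (fm F y 0)) + ft F \<one>\<^bsub>P\<^esub> y"
    using assms(3,4) one unfolding monoidal_functor_def by blast
  moreover have "\<one>\<^bsub>P\<^esub> \<otimes>\<^bsub>P\<^esub> y = y" using assms(1,4) by (rule monoid.l_one)
  moreover have "act \<one>\<^bsub>P\<^esub> a = a" for a using assms(2) unfolding pi_module_def by blast
  moreover have "fo F \<one>\<^bsub>P\<^esub> = \<one>\<^bsub>P\<^esub>" using assms(3) unfolding monoidal_functor_def by blast
  ultimately show ?thesis
    using monoidal_functor_fm_zero[OF assms(3,4)] by (simp add: add.commute)
qed

lemma mnat_fo_eq:
  assumes "mnat P act F G t" "x \<in> carrier P"
  shows "fo F x = fo G x"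
  using assms unfolding mnat_def by blast

lemma mnat_fm_eq:
  assumes "mnat P act F G t" "x \<in> carrier P"
  shows "fm F x a = fm G x a"
proof -
  have "t x + fm F x a = fm G x a + t x" using assms unfolding mnat_def by blast
  then show ?thesis by (simp add: add.commute)
qed

lemma mnat_ft:
  assumes "mnat P act F G t" "x \<in> carrier P" "y \<in> carrier P"
  shows "ft G x y + t (x \<otimes>\<^bsub>P\<^esub> y) = (t x + act (fo F x) (t y)) + ft F x y"
  using assms unfolding mnat_def by blast

lemma mnat_unit_zero:
  assumes "mnat P act F G t" "fh F = 0" "fh G = 0"
  shows "t \<one>\<^bsub>P\<^esub> = 0"
  using assms unfolding mnat_def by simp

lemma cohomologous_fs_same_action:
  assumes "cohomologous_fs P act \<Gamma> F t G m" "\<sigma> \<in> carrier \<Gamma>" "x \<in> carrier P"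
  shows "fo (F \<sigma>) x = fo (G \<sigma>) x \<and> fm (F \<sigma>) x a = fm (G \<sigma>) x a"
proof -
  from assms(1) obtain u where "mnat P act (F \<sigma>) (G \<sigma>) (\<lambda>x. u x \<sigma>)"
    using assms(2) unfolding cohomologous_fs_def by blast
  then show ?thesis using assms(3) mnat_fo_eq mnat_fm_eq by metis
qed

lemma induced_cocycle_diff_eq_cobound2:
  assumes "monoid P" "pi_module P act"
    and mf: "\<forall>\<sigma>\<in>carrier \<Gamma>. monoidal_functor P act \<xi> (F \<sigma>)"
    and nat: "\<forall>\<sigma>\<in>carrier \<Gamma>. mnat P act (F \<sigma>) (G \<sigma>) (\<lambda>x. u x \<sigma>)"
    and coh: "\<forall>\<sigma>\<in>carrier \<Gamma>. \<forall>\<tau>\<in>carrier \<Gamma>. \<forall>x\<in>carrier P.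
           u x (\<sigma> \<otimes>\<^bsub>\<Gamma>\<^esub> \<tau>) + t x \<sigma> \<tau>
             = m x \<sigma> \<tau> + (u (fo (G \<tau>) x) \<sigma> + fm (F \<sigma>) (fo (F \<tau>) x) (u x \<tau>))"
  shows "cochain3_eq P \<Gamma>
           (minus3 (induced_cocycle \<xi> F t) (induced_cocycle \<xi> G m))
           (cobound2 P \<Gamma> act (\<lambda>\<sigma> x. fo (F \<sigma>) x) (\<lambda>\<sigma> a. fm (F \<sigma>) \<one>\<^bsub>P\<^esub> a) ((\<lambda>x y. 0), u))"
  unfolding cochain3_eq_def minus3_def induced_cocycle_def cobound2_def prod.case
proof (intro conjI ballI)
  fix x y z assume "x \<in> carrier P"
  then show "\<xi> x y z - \<xi> x y z = act x 0 - 0 + 0 - 0"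
    using pi_module_act_zero[OF assms(2)] by simp
next
  fix x y \<sigma> assume x: "x \<in> carrier P" and y: "y \<in> carrier P" and \<sigma>: "\<sigma> \<in> carrier \<Gamma>"
  have "fm (F \<sigma>) \<one>\<^bsub>P\<^esub> 0 = 0"
    by (rule monoidal_functor_fm_zero[OF mf[rule_format, OF \<sigma>] monoid.one_closed[OF assms(1)]])
  then show "ft (F \<sigma>) x y - ft (G \<sigma>) x y =
       fm (F \<sigma>) \<one>\<^bsub>P\<^esub> 0 - 0 - act (fo (F \<sigma>) x) (u y \<sigma>) + u (x \<otimes>\<^bsub>P\<^esub> y) \<sigma> - u x \<sigma>"
    using mnat_ft[of P act "F \<sigma>" "G \<sigma>" "\<lambda>x. u x \<sigma>", OF _ x y] nat \<sigma>
    by (simp add: algebra_simps)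
next
  fix x \<sigma> \<tau> assume x: "x \<in> carrier P" and \<sigma>: "\<sigma> \<in> carrier \<Gamma>" and \<tau>: "\<tau> \<in> carrier \<Gamma>"
  have "fo (G \<tau>) x = fo (F \<tau>) x"
    using nat \<tau> x mnat_fo_eq by metis
  moreover have "fo (F \<tau>) x \<in> carrier P"
    using mf \<tau> x unfolding monoidal_functor_def by blast
  then have "fm (F \<sigma>) (fo (F \<tau>) x) (u x \<tau>) = fm (F \<sigma>) \<one>\<^bsub>P\<^esub> (u x \<tau>)"
    using monoidal_functor_fm_eq_fm_one[OF assms(1,2)] mf \<sigma> by blast
  ultimately show "t x \<sigma> \<tau> - m x \<sigma> \<tau> = fm (F \<sigma>) \<one>\<^bsub>P\<^esub> (u x \<tau>) - u x (\<sigma> \<otimes>\<^bsub>\<Gamma>\<^esub> \<tau>) + u (fo (F \<tau>) x) \<sigma>"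
    using coh \<sigma> \<tau> x by (simp add: algebra_simps)
qed

theorem proposition4p1:
  fixes P :: "('p,'m) monoid_scheme" and \<Gamma> :: "('g,'n) monoid_scheme"
    and act :: "'p \<Rightarrow> 'a::ab_group_add \<Rightarrow> 'a"
    and \<xi> :: "'p \<Rightarrow> 'p \<Rightarrow> 'p \<Rightarrow> 'a"
    and F G :: "'g \<Rightarrow> ('p,'a) mfun"
    and t m :: "'p \<Rightarrow> 'g \<Rightarrow> 'g \<Rightarrow> 'a"
  assumes "group P" and "group \<Gamma>"
    and "pi_module P act"
    and "normalized_3cocycle P act \<xi>"
    and "factor_set P act \<xi> \<Gamma> F t" and "enough_strict \<Gamma> F"
    and "factor_set P act \<xi> \<Gamma> G m" and "enough_strict \<Gamma> G"
    and "cohomologous_fs P act \<Gamma> F t G m"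
  shows "(\<forall>\<sigma>\<in>carrier \<Gamma>. \<forall>x\<in>carrier P.
            fo (F \<sigma>) x = fo (G \<sigma>) x \<and> (\<forall>a. fm (F \<sigma>) x a = fm (G \<sigma>) x a))
       \<and> (\<exists>g \<in> C2_Gamma P \<Gamma>.
            cochain3_eq P \<Gamma>
              (minus3 (induced_cocycle \<xi> F t) (induced_cocycle \<xi> G m))
              (cobound2 P \<Gamma> act (\<lambda>\<sigma> x. fo (F \<sigma>) x) (\<lambda>\<sigma> a. fm (F \<sigma>) \<one>\<^bsub>P\<^esub> a) g))"
proof -
  obtain u where nat: "\<forall>\<sigma>\<in>carrier \<Gamma>. mnat P act (F \<sigma>) (G \<sigma>) (\<lambda>x. u x \<sigma>)"
    and u_one: "\<forall>x\<in>carrier P. u x \<one>\<^bsub>\<Gamma>\<^esub> = 0"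
    and coh: "\<forall>\<sigma>\<in>carrier \<Gamma>. \<forall>\<tau>\<in>carrier \<Gamma>. \<forall>x\<in>carrier P.
           u x (\<sigma> \<otimes>\<^bsub>\<Gamma>\<^esub> \<tau>) + t x \<sigma> \<tau>
             = m x \<sigma> \<tau> + (u (fo (G \<tau>) x) \<sigma> + fm (F \<sigma>) (fo (F \<tau>) x) (u x \<tau>))"
    using assms(9) unfolding cohomologous_fs_def by blast
  have "\<forall>\<sigma>\<in>carrier \<Gamma>. u \<one>\<^bsub>P\<^esub> \<sigma> = 0"
    using nat assms(6,8) mnat_unit_zero unfolding enough_strict_def by fast
  with u_one have "((\<lambda>x y. 0), u) \<in> C2_Gamma P \<Gamma>"
    unfolding C2_Gamma_def by simp
  moreover have "\<forall>\<sigma>\<in>carrier \<Gamma>. monoidal_functor P act \<xi> (F \<sigma>)"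
    using assms(5) unfolding factor_set_def by blast
  ultimately show ?thesis
    using cohomologous_fs_same_action[OF assms(9)]
      induced_cocycle_diff_eq_cobound2[OF group.is_monoid[OF assms(1)] assms(3) _ nat coh]
    by blast
qed

end
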